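(* Let $\varepsilon\in(0,1]$, $L\in[0,\infty)$, $q\in(1,\infty)$, let $b\in[1,\infty)$ satisfy $\max\{1,2L\}=\varepsilon b^{q-1}$, let $K\in\mathbb N\cap[\frac{2Lb}{\varepsilon},\frac{2Lb}{\varepsilon}+1]$, let $f\colon\mathbb R\to\mathbb R$ satisfy $|f(x)-f(y)|\le L|x-y|$ for all $x,y\in\mathbb R$, let $\mathfrak x_k=-b+\frac{2kb}{K}$ and $c_k=\frac{K(f(\mathfrak x_{\min\{k+1,K\}})-2f(\mathfrak x_k)+f(\mathfrak x_{\max\{k-1,0\}}))}{2b}$ for $k\in\{0,\dots,K\}$, let $\mathbf F=\mathbf A_{1,f(\mathfrak x_0)}\bullet\bigl(\bigoplus_{k=0}^K(c_k\circledast(\mathfrak i_1\bullet\mathbf A_{1,-\mathfrak x_k}))\bigr)$, and let $\mathfrak r(x)=\max\{x,0\}$. Then (i) $|(\mathcal R_{\mathfrak r}(\mathbf F))(x)-(\mathcal R_{\mathfrak r}(\mathbf F))(y)|\le L|x-y|$ for all $x,y\in\mathbb R$; (ii) $\sup_{x\in[-b,b]}|(\mathcal R_{\mathfrak r}(\mathbf F))(x)-f(x)|\le\frac{2Lb}{K}\le\varepsilon$; (iii) $|(\mathcal R_{\mathfrak r}(\mathbf F))(x)-f(x)|\le\varepsilon\max\{1,|x|^q\}$ for all $x\in\mathbb R$; (iv) $\mathbb D_1(\mathbf F)\le2(\max\{1,2L\})^{q/(q-1)}\varepsilon^{-q/(q-1)}+1$; and (v) $\mathcal P(\mathbf F)=3\mathbb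 D_1(\mathbf F)+1\le12(\max\{1,2L\})^{q/(q-1)}\varepsilon^{-q/(q-1)}$.
   Context: Artificial neural networks (ANNs). Let $\mathbb N=\{1,2,\dots\}$ and $\mathbf N=\bigcup_{L\in\mathbb N}\bigcup_{l_0,\dots,l_L\in\mathbb N}\prod_{k=1}^L(\mathbb R^{l_k\times l_{k-1}}\times\mathbb R^{l_k})$. For $\Phi=((W_1,B_1),\dots,(W_L,B_L))$ in the $(l_0,\dots,l_L)$ component, $\mathcal P(\Phi)=\sum_{k=1}^Ll_k(l_{k-1}+1)$, $\mathcal L(\Phi)=L$, $\mathcal I(\Phi)=l_0$, $\mathcal O(\Phi)=l_L$, $\mathbb D_1(\Phi)=l_1$. For $a\in C(\mathbb R,\mathbb R)$ the realization is $(\mathcal R_a(\Phi))(x_0)=W_Lx_{L-1}+B_L$ with $x_k=\mathfrak M_{a,l_k}(W_kx_{k-1}+B_k)$, $k=1,\dots,L-1$, $\mathfrak M_{a,m}$ applying $a$ componentwise. $\operatorname I_n$ is the identity matrix; $\mathbf A_{W,B}=((W,B))$ (for reals $w,b$, $\mathbf A_{w,b}$ has $1\times1$ weight $w$ and bias $b$). Composition: for $\Phi_1=((W_1,B_1),\dots,(W_L,B_L))$, $\Phi_2=((\mathscr W_1,\mathscr B_1),\dots,(\mathscr W_{\mathfrak L},\mathscr B_{\mathfrak L}))$ with $\mathcal I(\Phi_1)=\mathcal O(\Phi_2)$, $\Phi_1\bullet\Phi_2=((\mathscr W_1,\mathscr B_1),\dots,(\mathscr W_{\mathfrak L-1},\mathscr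 B_{\mathfrak L-1}),(W_1\mathscr W_{\mathfrak L},W_1\mathscr B_{\mathfrak L}+B_1),(W_2,B_2),\dots,(W_L,B_L))$. $\lambda\circledast\Phi=\mathbf A_{\lambda\operatorname I_{\mathcal O(\Phi)},0}\bullet\Phi$. $\mathbf P_n(\Phi_1,\dots,\Phi_n)$ (equal lengths) has $k$-th layer $(\operatorname{diag}(W_{1,k},\dots,W_{n,k}),(B_{1,k},\dots,B_{n,k}))$. $\mathfrak S_{m,n}=\mathbf A_{(\operatorname I_m\cdots\operatorname I_m),0}$, $\mathfrak T_{m,n}=\mathbf A_{(\operatorname I_m\cdots\operatorname I_m)^\top,0}$ ($n$ blocks). For $\Phi_u,\dots,\Phi_v$ with equal $\mathcal L,\mathcal I,\mathcal O$: $\bigoplus_{k=u}^v\Phi_k=\mathfrak S_{\mathcal O(\Phi_u),v-u+1}\bullet([\mathbf P_{v-u+1}(\Phi_u,\dots,\Phi_v)]\bullet\mathfrak T_{\mathcal I(\Phi_u),v-u+1})$. $\mathfrak i_n=((\operatorname I_n,0),(\operatorname I_n,0))$. *)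

theory Defs
  imports Complex_Main
begin

text \<open>ANNs are represented as lists of layers (W, B); a matrix W is a list of
rows (real list list), a vector is a real list. A layer in component
(l_{k-1}, l_k) has W with l_k rows of length l_{k-1} and B of length l_k.\<close>

type_synonym mat = "real list list"
type_synonym layer = "mat \<times> real list"
type_synonym ann = "layer list"

definition ncols :: "mat \<Rightarrow> nat" where
  "ncols M = (case M of [] \<Rightarrow> 0 | r # _ \<Rightarrow> length r)"

definition mat_vec :: "mat \<Rightarrow> real list \<Rightarrow> real list" where
  "mat_vec M x = map (\<lambda>r. sum_list (map2 (*) r x)) M"

definition vec_add :: "real list \<Rightarrow> real list \<Rightarrow> real list" where
  "vec_add x y = map2 (+) x y"

definition mat_mul :: "mat \<Rightarrow> mat \<Rightarrow> mat" where
  "mat_mul A B = map (\<lambda>r. mat_vec (transpose B) r) A"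

definition idm :: "nat \<Rightarrow> mat" where
  "idm n = map (\<lambda>i. map (\<lambda>j. if i = j then 1 else 0) [0..<n]) [0..<n]"

definition zvec :: "nat \<Rightarrow> real list" where
  "zvec n = replicate n 0"

fun realize :: "(real \<Rightarrow> real) \<Rightarrow> ann \<Rightarrow> real list \<Rightarrow> real list" where
  "realize a [] x = x"
| "realize a [(W, B)] x = vec_add (mat_vec W x) B"
| "realize a ((W, B) # l # ls) x = realize a (l # ls) (map a (vec_add (mat_vec W x) B))"

definition relu :: "real \<Rightarrow> real" where
  "relu x = max x 0"

definition ann_in :: "ann \<Rightarrow> nat" where
  "ann_in \<Phi> = ncols (fst (hd \<Phi>))"

definition ann_out :: "ann \<Rightarrow> nat" where
  "ann_out \<Phi> = length (snd (last \<Phi>))"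

definition ann_len :: "ann \<Rightarrow> nat" where
  "ann_len \<Phi> = length \<Phi>"

definition ann_dims :: "ann \<Rightarrow> nat list" where
  "ann_dims \<Phi> = ann_in \<Phi> # map (\<lambda>l. length (snd l)) \<Phi>"

definition ann_params :: "ann \<Rightarrow> nat" where
  "ann_params \<Phi> = sum_list (map2 (\<lambda>a b. b * (a + 1)) (ann_dims \<Phi>) (tl (ann_dims \<Phi>)))"

definition ann_D1 :: "ann \<Rightarrow> nat" where
  "ann_D1 \<Phi> = length (snd (hd \<Phi>))"

definition annA :: "mat \<Rightarrow> real list \<Rightarrow> ann" where
  "annA W B = [(W, B)]"

definition annA1 :: "real \<Rightarrow> real \<Rightarrow> ann" where
  "annA1 w b = [([[w]], [b])]"

text \<open>Composition \<Phi>1 \<bullet> \<Phi>2 (realizes \<R>(\<Phi>1) o \<R>(\<Phi>2)).\<close>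
definition ann_comp :: "ann \<Rightarrow> ann \<Rightarrow> ann" where
  "ann_comp \<Phi>1 \<Phi>2 =
     (let (W1, B1) = hd \<Phi>1; (WL, BL) = last \<Phi>2 in
      butlast \<Phi>2 @ [(mat_mul W1 WL, vec_add (mat_vec W1 BL) B1)] @ tl \<Phi>1)"

definition ann_scale :: "real \<Rightarrow> ann \<Rightarrow> ann" where
  "ann_scale c \<Phi> = ann_comp (annA (map (map (\<lambda>t. c * t)) (idm (ann_out \<Phi>))) (zvec (ann_out \<Phi>))) \<Phi>"

fun blockdiag :: "mat list \<Rightarrow> mat" where
  "blockdiag [] = []"
| "blockdiag (M # Ms) =
     map (\<lambda>r. r @ replicate (sum_list (map ncols Ms)) 0) M
     @ map (\<lambda>r. replicate (ncols M) 0 @ r) (blockdiag Ms)"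

text \<open>Parallelization \<P>_n(\<Phi>_1,...,\<Phi>_n) of networks of equal length.\<close>
definition ann_par :: "ann list \<Rightarrow> ann" where
  "ann_par Ps = map (\<lambda>k. (blockdiag (map (\<lambda>\<Phi>. fst (\<Phi> ! k)) Ps),
                          concat (map (\<lambda>\<Phi>. snd (\<Phi> ! k)) Ps)))
                    [0..<length (hd Ps)]"

definition annS :: "nat \<Rightarrow> nat \<Rightarrow> ann" where
  "annS m n = annA (map (\<lambda>r. concat (replicate n r)) (idm m)) (zvec m)"

definition annT :: "nat \<Rightarrow> nat \<Rightarrow> ann" where
  "annT m n = annA (concat (replicate n (idm m))) (zvec (m * n))"

text \<open>Sum \<oplus>_{k=u}^v \<Phi>_k, given the list [\<Phi>_u, ..., \<Phi>_v].\<close>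
definition ann_sum :: "ann list \<Rightarrow> ann" where
  "ann_sum Ps = ann_comp (annS (ann_out (hd Ps)) (length Ps))
                  (ann_comp (ann_par Ps) (annT (ann_in (hd Ps)) (length Ps)))"

definition ann_id :: "nat \<Rightarrow> ann" where
  "ann_id n = [(idm n, zvec n), (idm n, zvec n)]"

end

theory Submission
  imports Defs
begin

text \<open>The network computes x \<mapsto> f(x_0) + \<Sum>_k c_k max{x - x_k, 0}. Since c_k is the jump of the
slope of the piecewise linear interpolant of f at the grid x_0 < \<dots> < x_K, summation by parts
turns this sum into that interpolant, which is constant outside [-b, b]. Hence the realization is
L-Lipschitz, deviates from f by at most L h = 2Lb/K on [-b, b], and outside [-b, b] by at most
L|x| \<le> \<epsilon> b^{q-1}|x| \<le> \<epsilon>|x|^q. The network has K + 1 hidden neurons, and the choice of b gives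
K \<le> b^q + 1 = (max{1,2L})^{q/(q-1)} \<epsilon>^{-q/(q-1)} + 1.\<close>

definition mat_of :: "nat \<Rightarrow> nat \<Rightarrow> (nat \<Rightarrow> nat \<Rightarrow> real) \<Rightarrow> mat" where
  "mat_of n m g = map (\<lambda>i. map (\<lambda>j. g i j) [0..<m]) [0..<n]"

lemma mat_of_cong:
  "(\<And>i j. i < n \<Longrightarrow> j < m \<Longrightarrow> g i j = g' i j) \<Longrightarrow> mat_of n m g = mat_of n m g'"
  by (simp add: mat_of_def)

lemma ncols_mat_of: "ncols (mat_of (Suc n) m g) = m"
  by (simp add: mat_of_def ncols_def upt_conv_Cons del: upt_Suc)

lemma sum_list_map2_mult_upt:
  "sum_list (map2 (*) (map u [0..<m]) (map v [0..<m])) = (\<Sum>j<m. u j * v j)"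
  by (simp add: zip_map_map zip_same_conv_map sum_set_upt_conv_sum_list_nat[symmetric]
      atLeast0LessThan comp_def)

lemma mat_vec_mat_of:
  "mat_vec (mat_of n m g) (map v [0..<m]) = map (\<lambda>i. \<Sum>j<m. g i j * v j) [0..<n]"
  by (simp add: mat_vec_def mat_of_def sum_list_map2_mult_upt)

lemma vec_add_map_upt:
  "vec_add (map u [0..<n]) (map v [0..<n]) = map (\<lambda>i. u i + v i) [0..<n]"
  by (simp add: vec_add_def zip_map_map zip_same_conv_map)

lemma transpose_mat_of: "0 < n \<Longrightarrow> transpose (mat_of n m g) = mat_of m n (\<lambda>i j. g j i)"
  by (subst transpose_rectangle[where n = m]) (auto simp: mat_of_def)

lemma mat_mul_mat_of:
  assumes "0 < m"
  shows "mat_mul (mat_of n m g) (mat_of m p h) = mat_of n p (\<lambda>i k. \<Sum>j<m. g i j * h j k)"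
proof -
  have "mat_mul (mat_of n m g) (mat_of m p h) = map (mat_vec (mat_of p m (\<lambda>i j. h j i))) (mat_of n m g)"
    using assms by (simp add: mat_mul_def transpose_mat_of)
  also have "\<dots> = mat_of n p (\<lambda>i k. \<Sum>j<m. g i j * h j k)"
    by (simp only: mat_of_def[of n m] map_map o_def mat_vec_mat_of) (simp add: mat_of_def mult.commute)
  finally show ?thesis .
qed

lemma blockdiag_scalars:
  "blockdiag (map (\<lambda>k. [[a k]]) [m..<m + n]) = mat_of n n (\<lambda>i j. if i = j then a (m + i) else 0)"
proof (induction n arbitrary: m)
  case 0
  then show ?case by (simp add: mat_of_def)
next
  case (Suc n)
  have upt: "[m..<m + Suc n] = m # [Suc m..<Suc m + n]"
    by (simp add: upt_conv_Cons)
  have ncols: "sum_list (map ncols (map (\<lambda>k. [[a k]]) xs)) = length xs" for xs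
    by (induction xs) (auto simp: ncols_def)
  have map_upt_Suc: "map g [0..<Suc k] = g 0 # map (\<lambda>i. g (Suc i)) [0..<k]" for g :: "nat \<Rightarrow> 'b" and k
    by (induction k) auto
  show ?case
    unfolding upt
    by (simp only: list.map blockdiag.simps Suc.IH ncols mat_of_def map_upt_Suc)
      (simp add: ncols_def map_replicate_trivial del: upt_Suc)
qed

section \<open>The network as a one-hidden-layer ReLU network\<close>

definition relu_sum_ann :: "nat \<Rightarrow> (nat \<Rightarrow> real) \<Rightarrow> (nat \<Rightarrow> real) \<Rightarrow> real \<Rightarrow> ann" where
  "relu_sum_ann n a c d =
     [(mat_of n 1 (\<lambda>_ _. 1), map a [0..<n]), (mat_of 1 n (\<lambda>_ j. c j), [d])]"

lemma realize_relu_sum_ann: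
  "hd (realize relu (relu_sum_ann n a c d) [x]) = d + (\<Sum>j<n. c j * relu (x + a j))"
proof -
  have singleton: "[y] = map (\<lambda>_. y) [0..<1]" for y :: real
    by simp
  show ?thesis
    unfolding relu_sum_ann_def
    by (simp only: realize.simps singleton mat_vec_mat_of vec_add_map_upt map_map o_def)
      (simp add: add.commute)
qed

lemma ann_D1_relu_sum_ann: "ann_D1 (relu_sum_ann (Suc K) a c d) = Suc K"
  by (simp add: relu_sum_ann_def ann_D1_def)

lemma ann_params_relu_sum_ann: "ann_params (relu_sum_ann (Suc K) a c d) = 3 * Suc K + 1"
  by (simp add: relu_sum_ann_def ann_params_def ann_dims_def ann_in_def ncols_mat_of)

lemma ann_comp_Cons_snoc:
  "ann_comp ((W1, B1) # \<Phi>1) (\<Phi>2 @ [(W, B)]) = \<Phi>2 @ [(mat_mul W1 W, vec_add (mat_vec W1 B) B1)] @ \<Phi>1"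
  by (simp add: ann_comp_def)

lemma ann_scale_shifted_identity:
  "ann_scale c (ann_comp (ann_id 1) (annA1 1 a)) = [([[1]], [a]), ([[c]], [0])]"
  by (simp add: ann_scale_def ann_comp_def ann_id_def annA1_def annA_def ann_out_def idm_def
      zvec_def mat_mul_def mat_vec_def vec_add_def)

lemma ann_par_shifted_identities:
  "ann_par (map (\<lambda>k. [([[1]], [a k]), ([[c k]], [0])]) [0..<Suc K]) =
    [(mat_of (Suc K) (Suc K) (\<lambda>i j. if i = j then 1 else 0), map a [0..<Suc K]),
     (mat_of (Suc K) (Suc K) (\<lambda>i j. if i = j then c i else 0), map (\<lambda>_. 0) [0..<Suc K])]"
proof -
  let ?Ps = "map (\<lambda>k. [([[1]], [a k]), ([[c k]], [0::real])]) [0..<Suc K]"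
  have layers: "[0..<length (hd ?Ps)] = [0, 1]"
    by (simp only: hd_map[of "[0..<Suc K]"] upt_conv_Cons[of 0 "Suc K"]) (simp add: upt_rec)
  have concat_singletons: "concat (map (\<lambda>k. [g k]) xs) = map g xs" for g :: "nat \<Rightarrow> real" and xs
    by (induction xs) auto
  have "blockdiag (map (\<lambda>k. [[g k]]) [0..<Suc K]) = mat_of (Suc K) (Suc K) (\<lambda>i j. if i = j then g i else 0)"
    for g
    using blockdiag_scalars[of g 0 "Suc K"] by (simp only: add_0)
  from this[of "\<lambda>_. 1"] this[of c] concat_singletons[of a] concat_singletons[of "\<lambda>_. 0"]
  show ?thesis
    unfolding ann_par_def layers by (simp add: comp_def del: upt_Suc)
qed

lemma ann_comp_affine_ann_sum_eq_relu_sum_ann: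
  "ann_comp (annA1 1 d)
     (ann_sum (map (\<lambda>k. ann_scale (c k) (ann_comp (ann_id 1) (annA1 1 (a k)))) [0..<K + 1])) =
    relu_sum_ann (Suc K) a c d"
proof -
  let ?n = "Suc K" and ?zeros = "\<lambda>n. map (\<lambda>_. 0::real) [0..<n]"
  let ?Ps = "map (\<lambda>k. [([[1]], [a k]), ([[c k]], [0::real])]) [0..<Suc K]"
  have Ps: "map (\<lambda>k. ann_scale (c k) (ann_comp (ann_id 1) (annA1 1 (a k)))) [0..<K + 1] = ?Ps"
    by (simp only: ann_scale_shifted_identity Suc_eq_plus1)
  have hd_Ps: "hd ?Ps = [([[1]], [a 0]), ([[c 0]], [0])]"
    by (simp only: hd_map[of "[0..<Suc K]"] upt_conv_Cons[of 0 "Suc K"]) simp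
  have io: "ann_out (hd ?Ps) = 1" "ann_in (hd ?Ps) = 1"
    by (simp_all only: hd_Ps ann_out_def ann_in_def) (simp_all add: ncols_def)
  have idm1: "idm 1 = [[1]]"
    by (simp add: idm_def)
  have concat_replicate: "concat (replicate n [x]) = replicate n x" for n and x :: "real list"
    by (induction n) auto
  have T: "annT 1 ?n = [] @ [(mat_of ?n 1 (\<lambda>_ _. 1), ?zeros ?n)]"
    by (simp only: annT_def annA_def idm1 concat_replicate zvec_def)
      (simp add: mat_of_def map_replicate_trivial del: upt_Suc)
  have S: "annS 1 ?n = [(mat_of 1 ?n (\<lambda>_ _. 1), ?zeros 1)]"
    by (simp only: annS_def annA_def idm1 concat_replicate zvec_def)
      (simp add: mat_of_def map_replicate_trivial del: upt_Suc)
  have A: "annA1 1 d = [(mat_of 1 1 (\<lambda>_ _. 1), map (\<lambda>_. d) [0..<1])]"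
    by (simp add: annA1_def mat_of_def)
  have mul_hidden: "mat_mul (mat_of ?n ?n (\<lambda>i j. if i = j then 1 else 0)) (mat_of ?n 1 (\<lambda>_ _. 1)) =
      mat_of ?n 1 (\<lambda>_ _. 1)"
    by (simp only: mat_mul_mat_of zero_less_Suc) (rule mat_of_cong, simp)
  have bias_hidden: "vec_add (mat_vec (mat_of ?n ?n (\<lambda>i j. if i = j then 1 else 0)) (?zeros ?n))
      (map a [0..<?n]) = map a [0..<?n]"
    by (simp add: mat_vec_mat_of vec_add_map_upt del: upt_Suc)
  have mul_out: "mat_mul (mat_of 1 ?n (\<lambda>_ _. 1)) (mat_of ?n ?n (\<lambda>i j. if i = j then c i else 0)) =
      mat_of 1 ?n (\<lambda>_ j. c j)"
    by (simp only: mat_mul_mat_of zero_less_Suc) (rule mat_of_cong, simp)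
  have bias_out: "vec_add (mat_vec (mat_of 1 ?n (\<lambda>_ _. 1)) (?zeros ?n)) (?zeros 1) = ?zeros 1"
    by (simp only: mat_vec_mat_of vec_add_map_upt) simp
  have mul_affine: "mat_mul (mat_of 1 1 (\<lambda>_ _. 1)) (mat_of 1 ?n (\<lambda>_ j. c j)) = mat_of 1 ?n (\<lambda>_ j. c j)"
    by (simp only: mat_mul_mat_of zero_less_one) (rule mat_of_cong, simp)
  have bias_affine: "vec_add (mat_vec (mat_of 1 1 (\<lambda>_ _. 1)) (?zeros 1)) (map (\<lambda>_. d) [0..<1]) =
      map (\<lambda>_. d) [0..<1]"
    by (simp only: mat_vec_mat_of vec_add_map_upt) simp
  have par_T: "ann_comp (ann_par ?Ps) (annT 1 ?n) =
      [(mat_of ?n 1 (\<lambda>_ _. 1), map a [0..<?n])] @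
      [(mat_of ?n ?n (\<lambda>i j. if i = j then c i else 0), ?zeros ?n)]"
    unfolding ann_par_shifted_identities T ann_comp_Cons_snoc mul_hidden bias_hidden by simp
  have sum: "ann_sum ?Ps =
      [(mat_of ?n 1 (\<lambda>_ _. 1), map a [0..<?n])] @ [(mat_of 1 ?n (\<lambda>_ j. c j), ?zeros 1)]"
    unfolding ann_sum_def io length_map length_upt diff_zero par_T S ann_comp_Cons_snoc mul_out bias_out
    by simp
  show ?thesis
    unfolding Ps A sum ann_comp_Cons_snoc mul_affine bias_affine relu_sum_ann_def by simp
qed

section \<open>Piecewise linear interpolation\<close>

definition clamp01 :: "real \<Rightarrow> real" where
  "clamp01 y = min 1 (max 0 y)"

lemma clamp01_mono: "u \<le> v \<Longrightarrow> clamp01 u \<le> clamp01 v"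
  by (simp add: clamp01_def)

lemma sum_clamp01_shifts: "(\<Sum>k<n. clamp01 (u - real k)) = min (real n) (max 0 u)"
  by (induction n) (auto simp: clamp01_def)

lemma sum_clamp01_shifts_on_cell:
  assumes "j < n" "real j \<le> u" "u \<le> real j + 1"
  shows "(\<Sum>k<n. a k * clamp01 (u - real k)) = (\<Sum>k<j. a k) + a j * (u - real j)"
  using assms
proof (induction n)
  case 0
  then show ?case by simp
next
  case (Suc n)
  show ?case
  proof (cases "j < n")
    case True
    then have "clamp01 (u - real n) = 0"
      using Suc.prems by (simp add: clamp01_def)
    then show ?thesis using Suc True by simp
  next
    case False
    then have "j = n" using Suc.prems by simp
    moreover have "(\<Sum>k<n. a k * clamp01 (u - real k)) = (\<Sum>k<n. a k)"
      using \<open>j = n\<close> Suc.prems by (intro sum.cong) (auto simp: clamp01_def)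
    ultimately show ?thesis using Suc.prems by (simp add: clamp01_def)
  qed
qed

lemma sum_clamp01_shifts_lipschitz:
  assumes "0 \<le> A" "u \<le> v" and bound: "\<And>k. k < n \<Longrightarrow> \<bar>a k\<bar> \<le> A"
  shows "\<bar>(\<Sum>k<n. a k * clamp01 (v - real k)) - (\<Sum>k<n. a k * clamp01 (u - real k))\<bar> \<le> A * (v - u)"
proof -
  let ?\<delta> = "\<lambda>k. clamp01 (v - real k) - clamp01 (u - real k)"
  have \<delta>_nonneg: "0 \<le> ?\<delta> k" for k
    using \<open>u \<le> v\<close> by (simp add: clamp01_mono)
  have "\<bar>(\<Sum>k<n. a k * clamp01 (v - real k)) - (\<Sum>k<n. a k * clamp01 (u - real k))\<bar>
      = \<bar>\<Sum>k<n. a k * ?\<delta> k\<bar>"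
    by (simp add: sum_subtractf algebra_simps)
  also have "\<dots> \<le> (\<Sum>k<n. \<bar>a k\<bar> * ?\<delta> k)"
    using sum_abs[of "\<lambda>k. a k * ?\<delta> k" "{..<n}"] \<delta>_nonneg by (simp add: abs_mult)
  also have "\<dots> \<le> (\<Sum>k<n. A * ?\<delta> k)"
    using bound \<delta>_nonneg by (intro sum_mono mult_right_mono) auto
  also have "\<dots> = A * (min (real n) (max 0 v) - min (real n) (max 0 u))"
    by (simp add: sum_distrib_left[symmetric] sum_subtractf sum_clamp01_shifts)
  also have "\<dots> \<le> A * (v - u)"
    using \<open>0 \<le> A\<close> \<open>u \<le> v\<close> by (intro mult_left_mono) auto
  finally show ?thesis .
qed

text \<open>The piecewise linear function through the points (x0 + k h, v k), k \<le> K, extended by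
constants outside [x0, x0 + K h].\<close>

definition pl_interp :: "real \<Rightarrow> real \<Rightarrow> nat \<Rightarrow> (nat \<Rightarrow> real) \<Rightarrow> real \<Rightarrow> real" where
  "pl_interp x0 h K v x = v 0 + (\<Sum>k<K. (v (Suc k) - v k) * clamp01 ((x - x0) / h - real k))"

lemma pl_interp_below:
  assumes "0 < h" "x \<le> x0"
  shows "pl_interp x0 h K v x = v 0"
proof -
  have "(x - x0) / h \<le> 0"
    using assms by (simp add: divide_nonpos_pos)
  then show ?thesis
    by (simp add: pl_interp_def clamp01_def)
qed

lemma pl_interp_above:
  assumes "0 < h" "x0 + real K * h \<le> x"
  shows "pl_interp x0 h K v x = v K"
proof -
  have "real K \<le> (x - x0) / h"
    using assms by (simp add: field_simps)
  then have "(\<Sum>k<K. (v (Suc k) - v k) * clamp01 ((x - x0) / h - real k)) = (\<Sum>k<K. v (Suc k) - v k)"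
    by (intro sum.cong) (auto simp: clamp01_def)
  then show ?thesis
    by (simp add: pl_interp_def sum_lessThan_telescope)
qed

lemma pl_interp_on_cell:
  assumes "0 < h" "j < K" "x0 + real j * h \<le> x" "x \<le> x0 + real (Suc j) * h"
  shows "pl_interp x0 h K v x = v j + (v (Suc j) - v j) * ((x - x0) / h - real j)"
proof -
  have "real j \<le> (x - x0) / h" "(x - x0) / h \<le> real j + 1"
    using assms by (simp_all add: field_simps)
  with \<open>j < K\<close> show ?thesis
    by (simp add: pl_interp_def sum_clamp01_shifts_on_cell sum_lessThan_telescope)
qed

lemma pl_interp_lipschitz:
  assumes "0 < h" "0 \<le> L" and steps: "\<And>k. k < K \<Longrightarrow> \<bar>v (Suc k) - v k\<bar> \<le> L * h"
  shows "\<bar>pl_interp x0 h K v x - pl_interp x0 h K v y\<bar> \<le> L * \<bar>x - y\<bar>"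
proof -
  have le: "\<bar>pl_interp x0 h K v y - pl_interp x0 h K v x\<bar> \<le> L * (y - x)" if "x \<le> y" for x y
  proof -
    have "(x - x0) / h \<le> (y - x0) / h"
      using that \<open>0 < h\<close> by (simp add: divide_right_mono)
    from sum_clamp01_shifts_lipschitz[OF _ this steps] assms(1,2)
    have "\<bar>pl_interp x0 h K v y - pl_interp x0 h K v x\<bar> \<le> L * h * ((y - x0) / h - (x - x0) / h)"
      by (simp add: pl_interp_def)
    also have "\<dots> = L * (y - x)"
      using \<open>0 < h\<close> by (simp add: field_simps)
    finally show ?thesis .
  qed
  show ?thesis
    using le[of x y] le[of y x] by (cases "x \<le> y") (simp_all add: abs_minus_commute)
qed

lemma lipschitz_secant_error:
  fixes f :: "real \<Rightarrow> real"
  assumes lip: "\<And>x y. \<bar>f x - f y\<bar> \<le> L * \<bar>x - y\<bar>" and "0 \<le> L" "0 \<le> t" "t \<le> 1"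
  shows "\<bar>f a + (f (a + h) - f a) * t - f (a + t * h)\<bar> \<le> L * \<bar>h\<bar>"
proof -
  let ?x = "a + t * h"
  have "f a + (f (a + h) - f a) * t - f x = (1 - t) * (f a - f x) + t * (f (a + h) - f x)" for x
    by (simp add: algebra_simps)
  then have "\<bar>f a + (f (a + h) - f a) * t - f ?x\<bar> = \<bar>(1 - t) * (f a - f ?x) + t * (f (a + h) - f ?x)\<bar>"
    by presburger
  also have "\<dots> \<le> (1 - t) * \<bar>f a - f ?x\<bar> + t * \<bar>f (a + h) - f ?x\<bar>"
    using assms by (simp add: abs_triangle_ineq[THEN order_trans] abs_mult)
  also have "\<dots> \<le> (1 - t) * (L * \<bar>h\<bar>) + t * (L * \<bar>h\<bar>)"
  proof -
    have "a - ?x = - (t * h)" "(a + h) - ?x = (1 - t) * h"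
      by (simp_all add: algebra_simps)
    then have "\<bar>a - ?x\<bar> \<le> \<bar>h\<bar>" "\<bar>(a + h) - ?x\<bar> \<le> \<bar>h\<bar>"
      using assms by (simp_all add: abs_mult mult_left_le_one_le)
    then show ?thesis
      using lip[of a ?x] lip[of "a + h" ?x] assms
      by (intro add_mono mult_left_mono) (auto intro: order_trans mult_left_mono)
  qed
  also have "\<dots> = L * \<bar>h\<bar>"
    by (simp add: algebra_simps)
  finally show ?thesis .
qed

lemma obtain_unit_cell:
  assumes "0 < K" "0 \<le> u" "u \<le> real K"
  obtains j where "j < K" "real j \<le> u" "u \<le> real j + 1"
proof (cases "real K - 1 \<le> u")
  case True
  then show ?thesis
    using assms by (intro that[of "K - 1"]) (auto simp: of_nat_diff)
next
  case False
  then have "nat \<lfloor>u\<rfloor> < K"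
    using \<open>0 < K\<close> by linarith
  then show ?thesis
    using \<open>0 \<le> u\<close> by (intro that[of "nat \<lfloor>u\<rfloor>"]) linarith+
qed

lemma pl_interp_error:
  fixes f :: "real \<Rightarrow> real"
  assumes lip: "\<And>x y. \<bar>f x - f y\<bar> \<le> L * \<bar>x - y\<bar>" and "0 \<le> L" "0 < h" "0 < K"
    and v: "\<And>k. v k = f (x0 + real k * h)"
    and "x0 \<le> x" "x \<le> x0 + real K * h"
  shows "\<bar>pl_interp x0 h K v x - f x\<bar> \<le> L * h"
proof -
  have "0 \<le> (x - x0) / h" "(x - x0) / h \<le> real K"
    using assms by (simp_all add: field_simps)
  with \<open>0 < K\<close> obtain j where j: "j < K" "real j \<le> (x - x0) / h" "(x - x0) / h \<le> real j + 1"
    by (rule obtain_unit_cell)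
  define t where "t = (x - x0) / h - real j"
  have t: "0 \<le> t" "t \<le> 1" "x = (x0 + real j * h) + t * h"
    using j \<open>0 < h\<close> by (auto simp: t_def field_simps)
  have "pl_interp x0 h K v x = v j + (v (Suc j) - v j) * t"
    unfolding t_def using j \<open>0 < h\<close> by (intro pl_interp_on_cell) (simp_all add: field_simps)
  also have "\<dots> = f (x0 + real j * h) + (f ((x0 + real j * h) + h) - f (x0 + real j * h)) * t"
    by (simp add: v algebra_simps)
  finally show ?thesis
    using lipschitz_secant_error[OF lip \<open>0 \<le> L\<close> t(1,2), of "x0 + real j * h" h] \<open>0 < h\<close> t(3)
    by simp
qed

lemma pl_interp_error_outside:
  fixes f :: "real \<Rightarrow> real"
  assumes lip: "\<And>x y. \<bar>f x - f y\<bar> \<le> L * \<bar>x - y\<bar>" and "0 \<le> L" "0 < h"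
    and v: "\<And>k. v k = f (- b + real k * h)"
    and Kh: "real K * h = 2 * b" and "b \<le> \<bar>x\<bar>"
  shows "\<bar>pl_interp (- b) h K v x - f x\<bar> \<le> L * \<bar>x\<bar>"
proof -
  have "0 \<le> real K * h"
    using \<open>0 < h\<close> by simp
  then have "0 \<le> b"
    using Kh by simp
  consider "x \<le> - b" | "b \<le> x"
    using \<open>b \<le> \<bar>x\<bar>\<close> by linarith
  then show ?thesis
  proof cases
    case 1
    then have "\<bar>pl_interp (- b) h K v x - f x\<bar> = \<bar>f (- b) - f x\<bar>"
      using \<open>0 < h\<close> by (simp add: pl_interp_below v)
    also have "\<dots> \<le> L * \<bar>- b - x\<bar>"
      by (rule lip)
    also have "\<dots> \<le> L * \<bar>x\<bar>"
      using 1 \<open>0 \<le> b\<close> \<open>0 \<le> L\<close> by (intro mult_left_mono) auto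
    finally show ?thesis .
  next
    case 2
    then have "\<bar>pl_interp (- b) h K v x - f x\<bar> = \<bar>f b - f x\<bar>"
      using \<open>0 < h\<close> Kh by (simp add: pl_interp_above v)
    also have "\<dots> \<le> L * \<bar>b - x\<bar>"
      by (rule lip)
    also have "\<dots> \<le> L * \<bar>x\<bar>"
      using 2 \<open>0 \<le> b\<close> \<open>0 \<le> L\<close> by (intro mult_left_mono) auto
    finally show ?thesis .
  qed
qed

section \<open>ReLU sums as interpolants\<close>

lemma sum_lessThan_Suc_backward_diff_mult:
  fixes S r :: "nat \<Rightarrow> real"
  shows "(\<Sum>k<Suc n. (S k - (if k = 0 then 0 else S (k - 1))) * r k)
    = (\<Sum>k<n. S k * (r k - r (Suc k))) + S n * r n"
  by (induction n) (auto simp: algebra_simps)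

lemma relu_diff_shift: "0 < h \<Longrightarrow> relu y - relu (y - h) = h * clamp01 (y / h)"
  by (auto simp: relu_def clamp01_def min_def max_def field_simps)

text \<open>Slopes are taken as 0 outside the grid; this is where the truncated k - 1 and min (k + 1) K
in c k come from.\<close>

lemma realize_relu_sum_ann_eq_pl_interp:
  assumes "0 < h" "0 < K"
    and nodes: "\<And>k. xk k = x0 + real k * h"
    and coeffs: "\<And>k. c k = (v (min (k + 1) K) - 2 * v k + v (k - 1)) / h"
  shows "hd (realize relu (relu_sum_ann (Suc K) (\<lambda>k. - xk k) c (v 0)) [x]) = pl_interp x0 h K v x"
proof -
  define S where "S k = (if k < K then (v (Suc k) - v k) / h else 0)" for k
  have c_diff: "c k = S k - (if k = 0 then 0 else S (k - 1))" if k: "k < Suc K" for k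
  proof -
    consider "k = 0" | "0 < k" "k < K" | "k = K"
      using k by (metis less_Suc_eq not_gr_zero)
    then show ?thesis
      using \<open>0 < h\<close> \<open>0 < K\<close> by cases (auto simp: coeffs S_def min_def field_simps)
  qed
  have relu_step: "relu (x - xk k) - relu (x - xk (Suc k)) = h * clamp01 ((x - x0) / h - real k)" for k
  proof -
    have "x - xk (Suc k) = (x - xk k) - h" "(x - x0) / h - real k = (x - xk k) / h"
      using \<open>0 < h\<close> by (simp_all add: nodes field_simps)
    then show ?thesis
      using relu_diff_shift[OF \<open>0 < h\<close>] by presburger
  qed
  have "(\<Sum>j<Suc K. c j * relu (x - xk j))
      = (\<Sum>j<Suc K. (S j - (if j = 0 then 0 else S (j - 1))) * relu (x - xk j))"
    by (intro sum.cong) (simp_all add: c_diff)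
  also have "\<dots> = (\<Sum>k<K. S k * (relu (x - xk k) - relu (x - xk (Suc k)))) + S K * relu (x - xk K)"
    by (rule sum_lessThan_Suc_backward_diff_mult)
  also have "\<dots> = (\<Sum>k<K. (v (Suc k) - v k) * clamp01 ((x - x0) / h - real k))"
    using \<open>0 < h\<close> by (simp add: S_def relu_step)
  finally show ?thesis
    by (simp add: pl_interp_def realize_relu_sum_ann)
qed

lemma lipschitz_growth_le_powr:
  fixes b q :: real
  assumes "0 < b" "b \<le> \<bar>x\<bar>" "1 \<le> q" "0 \<le> \<epsilon>" "L \<le> \<epsilon> * b powr (q - 1)"
  shows "L * \<bar>x\<bar> \<le> \<epsilon> * max 1 (\<bar>x\<bar> powr q)"
proof -
  have "L * \<bar>x\<bar> \<le> \<epsilon> * b powr (q - 1) * \<bar>x\<bar>"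
    using assms by (simp add: mult_right_mono)
  also have "\<dots> \<le> \<epsilon> * (\<bar>x\<bar> powr (q - 1) * \<bar>x\<bar>)"
    using assms by (simp add: mult.assoc mult_left_mono mult_right_mono powr_mono2)
  also have "\<bar>x\<bar> powr (q - 1) * \<bar>x\<bar> = \<bar>x\<bar> powr q"
    using assms by (simp add: powr_diff)
  also have "\<epsilon> * \<bar>x\<bar> powr q \<le> \<epsilon> * max 1 (\<bar>x\<bar> powr q)"
    using assms by (simp add: mult_left_mono)
  finally show ?thesis .
qed

lemma pl_interp_weighted_error:
  fixes f :: "real \<Rightarrow> real" and q :: real
  assumes lip: "\<And>x y. \<bar>f x - f y\<bar> \<le> L * \<bar>x - y\<bar>" and "0 \<le> L" "0 < h" "0 < K"
    and v: "\<And>k. v k = f (- b + real k * h)" and Kh: "real K * h = 2 * b"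
    and "1 \<le> q" "L * h \<le> \<epsilon>" "L \<le> \<epsilon> * b powr (q - 1)"
  shows "\<bar>pl_interp (- b) h K v x - f x\<bar> \<le> \<epsilon> * max 1 (\<bar>x\<bar> powr q)"
proof -
  have "0 \<le> \<epsilon>"
    using \<open>L * h \<le> \<epsilon>\<close> \<open>0 \<le> L\<close> \<open>0 < h\<close> by (meson less_imp_le mult_nonneg_nonneg order_trans)
  show ?thesis
  proof (cases "\<bar>x\<bar> \<le> b")
    case True
    then have "\<bar>pl_interp (- b) h K v x - f x\<bar> \<le> L * h"
      using Kh by (intro pl_interp_error[OF lip \<open>0 \<le> L\<close> \<open>0 < h\<close> \<open>0 < K\<close>]) (simp_all add: v)
    also have "\<dots> \<le> \<epsilon>"
      by fact
    also have "\<epsilon> \<le> \<epsilon> * max 1 (\<bar>x\<bar> powr q)"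
      using mult_left_mono[of 1 "max 1 (\<bar>x\<bar> powr q)" \<epsilon>] \<open>0 \<le> \<epsilon>\<close> by simp
    finally show ?thesis .
  next
    case False
    have "0 < real K * h"
      using \<open>0 < h\<close> \<open>0 < K\<close> by simp
    then have "0 < b"
      using Kh by simp
    have "\<bar>pl_interp (- b) h K v x - f x\<bar> \<le> L * \<bar>x\<bar>"
      using False by (intro pl_interp_error_outside[OF lip \<open>0 \<le> L\<close> \<open>0 < h\<close> v Kh]) simp
    also have "\<dots> \<le> \<epsilon> * max 1 (\<bar>x\<bar> powr q)"
      using False \<open>0 < b\<close> \<open>0 \<le> \<epsilon>\<close> assms(7,9) by (intro lipschitz_growth_le_powr) auto
    finally show ?thesis .
  qed
qed

lemma powr_conjugate_exponent_cancel:
  fixes \<epsilon> b q :: real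
  assumes "0 < \<epsilon>" "0 < b" "1 < q"
  shows "(\<epsilon> * b powr (q - 1)) powr (q / (q - 1)) * \<epsilon> powr (- q / (q - 1)) = b powr q"
proof -
  have "(\<epsilon> * b powr (q - 1)) powr (q / (q - 1)) = \<epsilon> powr (q / (q - 1)) * b powr q"
    using assms by (simp add: powr_mult powr_powr)
  moreover have "\<epsilon> powr (- q / (q - 1)) * \<epsilon> powr (q / (q - 1)) = 1"
    using assms by (simp add: powr_add[symmetric])
  ultimately show ?thesis
    by (simp add: algebra_simps)
qed

lemma relu_network_size_bounds:
  fixes \<epsilon> L b q :: real
  assumes "0 < \<epsilon>" "1 \<le> b" "1 < q" and M: "max 1 (2 * L) = \<epsilon> * b powr (q - 1)"
    and "real K \<le> 2 * L * b / \<epsilon> + 1"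
  shows "real K + 1 \<le> 2 * (max 1 (2 * L)) powr (q / (q - 1)) * \<epsilon> powr (- q / (q - 1)) + 1"
    and "3 * real K + 4 \<le> 12 * (max 1 (2 * L)) powr (q / (q - 1)) * \<epsilon> powr (- q / (q - 1))"
proof -
  have "2 * L * b / \<epsilon> \<le> max 1 (2 * L) * b / \<epsilon>"
    using assms(1,2) by (intro divide_right_mono mult_right_mono) auto
  also have "\<dots> = b powr q"
    using assms(1-3) by (simp add: M powr_diff)
  finally have "real K \<le> b powr q + 1"
    using assms(5) by linarith
  moreover have "1 \<le> b powr q"
    using assms(2,3) by (intro ge_one_powr_ge_zero) auto
  moreover have "(max 1 (2 * L)) powr (q / (q - 1)) * \<epsilon> powr (- q / (q - 1)) = b powr q"
    unfolding M by (rule powr_conjugate_exponent_cancel) (use assms(1-3) in auto)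
  ultimately show "real K + 1 \<le> 2 * (max 1 (2 * L)) powr (q / (q - 1)) * \<epsilon> powr (- q / (q - 1)) + 1"
    and "3 * real K + 4 \<le> 12 * (max 1 (2 * L)) powr (q / (q - 1)) * \<epsilon> powr (- q / (q - 1))"
    by (simp_all only: mult.assoc)
qed

theorem mainTheorem16:
  fixes \<epsilon> L q b :: real and K :: nat and f :: "real \<Rightarrow> real"
    and xk c :: "nat \<Rightarrow> real" and F :: ann
  assumes "0 < \<epsilon>" and "\<epsilon> \<le> 1" and "0 \<le> L" and "1 < q" and "1 \<le> b"
    and "max 1 (2 * L) = \<epsilon> * b powr (q - 1)"
    and "1 \<le> K" and "2 * L * b / \<epsilon> \<le> real K" and "real K \<le> 2 * L * b / \<epsilon> + 1"
    and "\<And>x y. \<bar>f x - f y\<bar> \<le> L * \<bar>x - y\<bar>"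
    and "\<And>k. xk k = - b + 2 * real k * b / real K"
    and "\<And>k. c k = real K * (f (xk (min (k + 1) K)) - 2 * f (xk k) + f (xk (k - 1))) / (2 * b)"
    and "F = ann_comp (annA1 1 (f (xk 0)))
               (ann_sum (map (\<lambda>k. ann_scale (c k) (ann_comp (ann_id 1) (annA1 1 (- xk k)))) [0..<K + 1]))"
  shows "(\<forall>x y. \<bar>hd (realize relu F [x]) - hd (realize relu F [y])\<bar> \<le> L * \<bar>x - y\<bar>)
    \<and> (SUP x\<in>{-b..b}. \<bar>hd (realize relu F [x]) - f x\<bar>) \<le> 2 * L * b / real K
    \<and> 2 * L * b / real K \<le> \<epsilon>
    \<and> (\<forall>x. \<bar>hd (realize relu F [x]) - f x\<bar> \<le> \<epsilon> * max 1 (\<bar>x\<bar> powr q))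
    \<and> real (ann_D1 F) \<le> 2 * (max 1 (2 * L)) powr (q / (q - 1)) * \<epsilon> powr (- q / (q - 1)) + 1
    \<and> ann_params F = 3 * ann_D1 F + 1
    \<and> real (ann_params F) \<le> 12 * (max 1 (2 * L)) powr (q / (q - 1)) * \<epsilon> powr (- q / (q - 1))"
proof -
  define h where "h = 2 * b / real K"
  have "0 < K" "0 < h" "real K * h = 2 * b" "L * h = 2 * L * b / real K"
    using assms(5,7) by (simp_all add: h_def)
  have nodes: "xk k = - b + real k * h" for k
    using assms(11) by (simp add: h_def)
  have coeffs: "c k = (f (xk (min (k + 1) K)) - 2 * f (xk k) + f (xk (k - 1))) / h" for k
    using assms(12)[of k] by (simp add: h_def)
  have F: "F = relu_sum_ann (Suc K) (\<lambda>k. - xk k) c (f (xk 0))"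
    unfolding assms(13) by (rule ann_comp_affine_ann_sum_eq_relu_sum_ann)
  have realize: "hd (realize relu F [x]) = pl_interp (- b) h K (\<lambda>k. f (xk k)) x" for x
    unfolding F by (rule realize_relu_sum_ann_eq_pl_interp[OF \<open>0 < h\<close> \<open>0 < K\<close> nodes coeffs])
  have node_values: "f (xk k) = f (- b + real k * h)" for k
    by (simp add: nodes)
  have steps: "\<bar>f (xk (Suc k)) - f (xk k)\<bar> \<le> L * h" for k
    using assms(10)[of "xk (Suc k)" "xk k"] \<open>0 < h\<close> by (simp add: nodes algebra_simps)
  let ?G = "pl_interp (- b) h K (\<lambda>k. f (xk k))"
  have approx: "2 * L * b / real K \<le> \<epsilon>"
    using assms(1,8) \<open>0 < K\<close> by (simp add: field_simps)
  have lipschitz: "\<forall>x y. \<bar>?G x - ?G y\<bar> \<le> L * \<bar>x - y\<bar>"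
    using \<open>0 < h\<close> assms(3) steps by (blast intro: pl_interp_lipschitz)
  have uniform: "(SUP x\<in>{-b..b}. \<bar>?G x - f x\<bar>) \<le> 2 * L * b / real K"
    unfolding \<open>L * h = 2 * L * b / real K\<close>[symmetric] using assms(5) \<open>real K * h = 2 * b\<close>
    by (intro cSUP_least pl_interp_error[OF assms(10,3) \<open>0 < h\<close> \<open>0 < K\<close>]) (auto simp: nodes)
  have "L \<le> \<epsilon> * b powr (q - 1)"
    using assms(6) by linarith
  then have weighted: "\<forall>x. \<bar>?G x - f x\<bar> \<le> \<epsilon> * max 1 (\<bar>x\<bar> powr q)"
    using assms(4) approx \<open>L * h = 2 * L * b / real K\<close> \<open>real K * h = 2 * b\<close>
    by (intro allI pl_interp_weighted_error[OF assms(10,3) \<open>0 < h\<close> \<open>0 < K\<close> node_values]) simp_all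
  have "ann_D1 F = Suc K" "ann_params F = 3 * Suc K + 1"
    by (simp_all only: F ann_D1_relu_sum_ann ann_params_relu_sum_ann)
  with relu_network_size_bounds[OF assms(1,5,4,6,9)] lipschitz uniform approx weighted
  show ?thesis
    unfolding realize by simp
qed

end
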